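(* Let $n\ge1$ and on $\mathbb{D}^n$ (coordinates $\alpha_0,\dots,\alpha_{n-1}$) use the Poisson bracket described in the context. Let $\Phi_n$ be the monic orthogonal polynomial on the unit circle and $\Phi_n^*$ its reversed polynomial. Then for all $z,w$, \[ \{\Phi_n(z),\Phi_n^*(w)\}=i\,w\,\frac{\Phi_n(z)\Phi_n^*(w)-\Phi_n(w)\Phi_n^*(z)}{z-w}. \]
   Context: Let $\rho_j=(1-|\alpha_j|^2)^{1/2}$; the Poisson bracket is $\{f,g\}=\sum_{j=0}^{n-1}i\rho_j^2\bigl(\frac{\partial f}{\partial\bar\alpha_j}\frac{\partial g}{\partial\alpha_j}-\frac{\partial f}{\partial\alpha_j}\frac{\partial g}{\partial\bar\alpha_j}\bigr)$ (Wirtinger derivatives), i.e. $\{\alpha_j,\alpha_k\}=0$, $\{\alpha_j,\bar\alpha_k\}=-i\rho_j^2\delta_{jk}$; $z,w$ are held fixed. $\Phi_0=1$, $\Phi_{k+1}(z)=z\Phi_k(z)-\bar\alpha_k\Phi_k^*(z)$, $\Phi_k^*(z)=z^k\overline{\Phi_k(1/\bar z)}$. The identity is an identity of polynomials in $z,w$. *)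

theory Defs
  imports "HOL-Analysis.Analysis" "HOL-Computational_Algebra.Polynomial"
begin

text \<open>Points of the polydisc are functions alpha :: nat => complex; only the
coordinates alpha 0, ..., alpha (n-1) matter.\<close>

definition polydisc :: "nat \<Rightarrow> (nat \<Rightarrow> complex) set" where
  "polydisc n = {a. \<forall>j<n. norm (a j) < 1}"

definition dRe :: "((nat \<Rightarrow> complex) \<Rightarrow> complex) \<Rightarrow> (nat \<Rightarrow> complex) \<Rightarrow> nat \<Rightarrow> complex" where
  "dRe f a j = vector_derivative (\<lambda>t::real. f (a(j := a j + of_real t))) (at 0)"

definition dIm :: "((nat \<Rightarrow> complex) \<Rightarrow> complex) \<Rightarrow> (nat \<Rightarrow> complex) \<Rightarrow> nat \<Rightarrow> complex" where
  "dIm f a j = vector_derivative (\<lambda>t::real. f (a(j := a j + \<i> * of_real t))) (at 0)"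

definition wirt :: "((nat \<Rightarrow> complex) \<Rightarrow> complex) \<Rightarrow> (nat \<Rightarrow> complex) \<Rightarrow> nat \<Rightarrow> complex" where
  "wirt f a j = (dRe f a j - \<i> * dIm f a j) / 2"

definition wirt_bar :: "((nat \<Rightarrow> complex) \<Rightarrow> complex) \<Rightarrow> (nat \<Rightarrow> complex) \<Rightarrow> nat \<Rightarrow> complex" where
  "wirt_bar f a j = (dRe f a j + \<i> * dIm f a j) / 2"

definition pbracket :: "nat \<Rightarrow> ((nat \<Rightarrow> complex) \<Rightarrow> complex) \<Rightarrow> ((nat \<Rightarrow> complex) \<Rightarrow> complex)
    \<Rightarrow> (nat \<Rightarrow> complex) \<Rightarrow> complex" where
  "pbracket n f g a = (\<Sum>j<n. \<i> * of_real (1 - (norm (a j))\<^sup>2) *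
      (wirt_bar f a j * wirt g a j - wirt f a j * wirt_bar g a j))"

text \<open>Reversed polynomial of degree (at most) k: p^*(z) = z^k conj(p(1/conj z)),
  i.e. the coefficients are conjugated and reversed.\<close>

definition rev_poly :: "nat \<Rightarrow> complex poly \<Rightarrow> complex poly" where
  "rev_poly k p = (\<Sum>i\<le>k. monom (cnj (coeff p (k - i))) i)"

text \<open>Monic orthogonal polynomials via the Szego recursion with Verblunsky coefficients a.\<close>

fun OPUC :: "(nat \<Rightarrow> complex) \<Rightarrow> nat \<Rightarrow> complex poly" where
  "OPUC a 0 = 1"
| "OPUC a (Suc k) = [:0, 1:] * OPUC a k - smult (cnj (a k)) (rev_poly k (OPUC a k))"

definition Phi :: "nat \<Rightarrow> complex \<Rightarrow> (nat \<Rightarrow> complex) \<Rightarrow> complex" where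
  "Phi k z a = poly (OPUC a k) z"

definition Phi_star :: "nat \<Rightarrow> complex \<Rightarrow> (nat \<Rightarrow> complex) \<Rightarrow> complex" where
  "Phi_star k z a = poly (rev_poly k (OPUC a k)) z"

end

theory Submission
  imports Defs
begin

text \<open>Each Phi_k(z) and Phi_k^*(z) is real-affine in every single coefficient alpha_j, so its
  Wirtinger derivatives can be read off the Szego recursion without any differentiability theory:
  in alpha_j with j <> k, Phi_{k+1} and Phi_{k+1}^* have the derivatives of the same linear
  combinations of Phi_k and Phi_k^*, while in alpha_k the only nonzero ones are
  d/d(conj alpha_k) Phi_{k+1}(z) = -Phi_k^*(z) and d/d alpha_k Phi_{k+1}^*(z) = -z Phi_k(z).
  So the brackets at level n+1 are bilinear combinations of those at level n plus one term coming
  from alpha_n, and induction on n proves the formula together with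
  {Phi_n(z), Phi_n(w)} = 0 = {Phi_n^*(z), Phi_n^*(w)}. The formula enters the induction step
  through its consequence z {Phi_n(z), Phi_n^*(w)} = w {Phi_n(w), Phi_n^*(z)}.\<close>

lemma coeff_rev_poly:
  "coeff (rev_poly k p) i = (if i \<le> k then cnj (coeff p (k - i)) else 0)"
  unfolding rev_poly_def by (simp add: coeff_sum coeff_monom)

lemma degree_rev_poly: "degree (rev_poly k p) \<le> k"
  by (rule degree_le) (simp add: coeff_rev_poly)

lemma rev_poly_diff_smult:
  "rev_poly k (p - smult c q) = rev_poly k p - smult (cnj c) (rev_poly k q)"
  by (rule poly_eqI) (simp add: coeff_rev_poly)

lemma rev_poly_Suc_pCons_0: "rev_poly (Suc k) (pCons 0 p) = rev_poly k p"
  by (rule poly_eqI) (simp add: coeff_rev_poly coeff_pCons Suc_diff_le split: nat.split)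

lemma rev_poly_Suc:
  assumes "degree q \<le> k"
  shows "rev_poly (Suc k) q = pCons 0 (rev_poly k q)"
proof (rule poly_eqI)
  fix i
  show "coeff (rev_poly (Suc k) q) i = coeff (pCons 0 (rev_poly k q)) i"
    using assms by (cases i) (simp_all add: coeff_rev_poly coeff_eq_0)
qed

lemma rev_poly_rev_poly:
  assumes "degree p \<le> k"
  shows "rev_poly k (rev_poly k p) = p"
  using assms by (intro poly_eqI) (simp add: coeff_rev_poly coeff_eq_0)

lemma degree_OPUC: "degree (OPUC a k) \<le> k"
proof (induction k)
  case (Suc k)
  then have "degree ([:0, 1:] * OPUC a k) \<le> Suc k"
    using degree_mult_le[of "[:0, 1:]" "OPUC a k"] by simp
  moreover have "degree (smult (cnj (a k)) (rev_poly k (OPUC a k))) \<le> Suc k"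
    using degree_rev_poly degree_smult_le le_SucI order_trans by blast
  ultimately show ?case by (simp add: degree_diff_le)
qed simp

lemma rev_poly_OPUC_Suc:
  "rev_poly (Suc k) (OPUC a (Suc k)) = rev_poly k (OPUC a k) - smult (a k) (pCons 0 (OPUC a k))"
  by (simp add: rev_poly_diff_smult rev_poly_Suc_pCons_0 rev_poly_Suc[OF degree_rev_poly]
      rev_poly_rev_poly[OF degree_OPUC])

lemma OPUC_cong: "(\<And>i. i < k \<Longrightarrow> b i = a i) \<Longrightarrow> OPUC b k = OPUC a k"
  by (induction k) auto

lemma Phi_Suc: "Phi (Suc k) z a = z * Phi k z a - cnj (a k) * Phi_star k z a"
  by (simp add: Phi_def Phi_star_def)

lemma Phi_star_Suc: "Phi_star (Suc k) z a = Phi_star k z a - a k * z * Phi k z a"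
  unfolding Phi_def Phi_star_def rev_poly_OPUC_Suc by simp

definition coord_affine :: "((nat \<Rightarrow> complex) \<Rightarrow> complex) \<Rightarrow> (nat \<Rightarrow> complex) \<Rightarrow> nat \<Rightarrow> bool" where
  "coord_affine f a j \<longleftrightarrow> (\<exists>d e. \<forall>s. f (a(j := a j + s)) = f a + s * d + cnj s * e)"

lemma vector_derivative_affine:
  "vector_derivative (\<lambda>t::real. c + of_real t * (d::complex)) (at 0) = d"
proof (rule vector_derivative_at)
  show "((\<lambda>t::real. c + of_real t * d) has_vector_derivative d) (at 0)"
    unfolding has_vector_derivative_def
    by (auto intro!: derivative_eq_intros simp: scaleR_conv_of_real)
qed

lemma wirt_eq_affine:
  assumes "\<And>s. f (a(j := a j + s)) = c + s * d + cnj s * e"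
  shows "wirt f a j = d" and "wirt_bar f a j = e"
proof -
  have "(\<lambda>t::real. f (a(j := a j + of_real t))) = (\<lambda>t. c + of_real t * (d + e))"
    unfolding assms by (simp add: algebra_simps)
  then have re: "dRe f a j = d + e"
    unfolding dRe_def by (simp add: vector_derivative_affine)
  have "(\<lambda>t::real. f (a(j := a j + \<i> * of_real t))) = (\<lambda>t. c + of_real t * (\<i> * d - \<i> * e))"
    unfolding assms by (simp add: algebra_simps)
  then have im: "dIm f a j = \<i> * d - \<i> * e"
    unfolding dIm_def by (simp add: vector_derivative_affine)
  show "wirt f a j = d" and "wirt_bar f a j = e"
    unfolding wirt_def wirt_bar_def re im by (simp_all add: algebra_simps)
qed

lemma coord_affine_expand:
  assumes "coord_affine f a j"
  shows "f (a(j := a j + s)) = f a + s * wirt f a j + cnj s * wirt_bar f a j"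
proof -
  obtain d e where de: "\<And>s. f (a(j := a j + s)) = f a + s * d + cnj s * e"
    using assms unfolding coord_affine_def by blast
  then show ?thesis
    using wirt_eq_affine[OF de] by simp
qed

lemma coord_affine_lincomb:
  assumes f: "coord_affine f a j" and g: "coord_affine g a j"
    and h: "\<And>s. h (a(j := a j + s)) = c * f (a(j := a j + s)) + d * g (a(j := a j + s))"
  shows "coord_affine h a j"
    and "wirt h a j = c * wirt f a j + d * wirt g a j"
    and "wirt_bar h a j = c * wirt_bar f a j + d * wirt_bar g a j"
proof -
  have ha: "h a = c * f a + d * g a"
    using h[of 0] by simp
  have expand: "h (a(j := a j + s)) = h a + s * (c * wirt f a j + d * wirt g a j)
      + cnj s * (c * wirt_bar f a j + d * wirt_bar g a j)" for s
    unfolding h ha coord_affine_expand[OF f] coord_affine_expand[OF g] by (simp add: algebra_simps)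
  then show "coord_affine h a j"
    unfolding coord_affine_def by blast
  show "wirt h a j = c * wirt f a j + d * wirt g a j"
    and "wirt_bar h a j = c * wirt_bar f a j + d * wirt_bar g a j"
    using wirt_eq_affine[OF expand] by simp_all
qed

lemma Phi_Suc_perturb_self:
  "Phi (Suc k) z (a(k := a k + s)) = Phi (Suc k) z a + s * 0 + cnj s * (- Phi_star k z a)"
  "Phi_star (Suc k) z (a(k := a k + s)) = Phi_star (Suc k) z a + s * (- z * Phi k z a) + cnj s * 0"
proof -
  have "OPUC (a(k := a k + s)) k = OPUC a k"
    by (rule OPUC_cong) simp
  then have "Phi k z (a(k := a k + s)) = Phi k z a" "Phi_star k z (a(k := a k + s)) = Phi_star k z a"
    unfolding Phi_def Phi_star_def by simp_all
  then show "Phi (Suc k) z (a(k := a k + s)) = Phi (Suc k) z a + s * 0 + cnj s * (- Phi_star k z a)"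
    and "Phi_star (Suc k) z (a(k := a k + s)) = Phi_star (Suc k) z a + s * (- z * Phi k z a) + cnj s * 0"
    by (simp_all add: Phi_Suc Phi_star_Suc algebra_simps)
qed

lemma wirt_Phi_Suc_self:
  "wirt (Phi (Suc k) z) a k = 0" "wirt_bar (Phi (Suc k) z) a k = - Phi_star k z a"
  "wirt (Phi_star (Suc k) z) a k = - z * Phi k z a" "wirt_bar (Phi_star (Suc k) z) a k = 0"
  using wirt_eq_affine[OF Phi_Suc_perturb_self(1)] wirt_eq_affine[OF Phi_Suc_perturb_self(2)]
  by simp_all

lemma Phi_Suc_perturb_other:
  assumes "j \<noteq> k"
  shows "Phi (Suc k) z (a(j := a j + s))
      = z * Phi k z (a(j := a j + s)) + - cnj (a k) * Phi_star k z (a(j := a j + s))"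
    and "Phi_star (Suc k) z (a(j := a j + s))
      = (- a k * z) * Phi k z (a(j := a j + s)) + 1 * Phi_star k z (a(j := a j + s))"
  using assms by (simp_all add: Phi_Suc Phi_star_Suc)

lemma coord_affine_Phi: "coord_affine (Phi k z) a j \<and> coord_affine (Phi_star k z) a j"
proof (induction k)
  case 0
  show ?case
    unfolding coord_affine_def Phi_def Phi_star_def
    by (intro conjI exI[of _ 0]) (simp_all add: rev_poly_def)
next
  case (Suc k)
  consider "j < k" | "j = k" | "k < j"
    by linarith
  then show ?case
  proof cases
    case 1
    then have "j \<noteq> k" by simp
    with Suc.IH show ?thesis
      using coord_affine_lincomb(1)[where h = "Phi (Suc k) z", OF _ _ Phi_Suc_perturb_other(1)]
        coord_affine_lincomb(1)[where h = "Phi_star (Suc k) z", OF _ _ Phi_Suc_perturb_other(2)]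
      by simp
  next
    case 2
    then show ?thesis
      unfolding coord_affine_def using Phi_Suc_perturb_self by blast
  next
    case 3
    then have "OPUC (a(j := a j + s)) (Suc k) = OPUC a (Suc k)" for s
      by (intro OPUC_cong) simp
    then show ?thesis
      unfolding coord_affine_def Phi_def Phi_star_def by (intro conjI exI[of _ 0]) simp_all
  qed
qed

lemma wirt_Phi_Suc_other:
  assumes "j \<noteq> k"
  shows "wirt (Phi (Suc k) z) a j = z * wirt (Phi k z) a j - cnj (a k) * wirt (Phi_star k z) a j"
    and "wirt_bar (Phi (Suc k) z) a j
      = z * wirt_bar (Phi k z) a j - cnj (a k) * wirt_bar (Phi_star k z) a j"
    and "wirt (Phi_star (Suc k) z) a j = wirt (Phi_star k z) a j - a k * z * wirt (Phi k z) a j"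
    and "wirt_bar (Phi_star (Suc k) z) a j
      = wirt_bar (Phi_star k z) a j - a k * z * wirt_bar (Phi k z) a j"
  using coord_affine_lincomb(2,3)[where h = "Phi (Suc k) z",
      OF _ _ Phi_Suc_perturb_other(1)[OF assms]]
    coord_affine_lincomb(2,3)[where h = "Phi_star (Suc k) z",
      OF _ _ Phi_Suc_perturb_other(2)[OF assms]]
    coord_affine_Phi
  by simp_all

lemma pbracket_Suc:
  "pbracket (Suc n) f g a = pbracket n f g a
    + \<i> * of_real (1 - (norm (a n))\<^sup>2) * (wirt_bar f a n * wirt g a n - wirt f a n * wirt_bar g a n)"
  unfolding pbracket_def by simp

lemma pbracket_antisym: "pbracket n f g a = - pbracket n g f a"
  unfolding pbracket_def by (simp add: sum_negf[symmetric] algebra_simps)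

lemma pbracket_lincomb_left:
  assumes "\<And>j. j < n \<Longrightarrow> wirt h a j = c * wirt f a j + d * wirt g a j"
    and "\<And>j. j < n \<Longrightarrow> wirt_bar h a j = c * wirt_bar f a j + d * wirt_bar g a j"
  shows "pbracket n h k a = c * pbracket n f k a + d * pbracket n g k a"
  unfolding pbracket_def sum_distrib_left sum.distrib[symmetric]
  by (rule sum.cong) (simp_all add: assms algebra_simps)

lemma pbracket_lincomb_right:
  assumes "\<And>j. j < n \<Longrightarrow> wirt h a j = c * wirt f a j + d * wirt g a j"
    and "\<And>j. j < n \<Longrightarrow> wirt_bar h a j = c * wirt_bar f a j + d * wirt_bar g a j"
  shows "pbracket n k h a = c * pbracket n k f a + d * pbracket n k g a"
  using pbracket_lincomb_left[of n h a c f d g k, OF assms] pbracket_antisym[of n k]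
  by simp

lemma pbracket_OPUC_Suc_left:
  "pbracket n (Phi (Suc n) z) g a = z * pbracket n (Phi n z) g a - cnj (a n) * pbracket n (Phi_star n z) g a"
  "pbracket n (Phi_star (Suc n) z) g a = pbracket n (Phi_star n z) g a - a n * z * pbracket n (Phi n z) g a"
  using pbracket_lincomb_left[of n "Phi (Suc n) z" a z "Phi n z" "- cnj (a n)" "Phi_star n z" g]
    pbracket_lincomb_left[of n "Phi_star (Suc n) z" a 1 "Phi_star n z" "- a n * z" "Phi n z" g]
  by (simp_all add: wirt_Phi_Suc_other)

lemma pbracket_OPUC_Suc_right:
  "pbracket n f (Phi (Suc n) w) a = w * pbracket n f (Phi n w) a - cnj (a n) * pbracket n f (Phi_star n w) a"
  "pbracket n f (Phi_star (Suc n) w) a = pbracket n f (Phi_star n w) a - a n * w * pbracket n f (Phi n w) a"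
  using pbracket_lincomb_right[of n "Phi (Suc n) w" a w "Phi n w" "- cnj (a n)" "Phi_star n w" f]
    pbracket_lincomb_right[of n "Phi_star (Suc n) w" a 1 "Phi_star n w" "- a n * w" "Phi n w" f]
  by (simp_all add: wirt_Phi_Suc_other)

lemma of_real_1_minus_norm_power2: "complex_of_real (1 - (norm x)\<^sup>2) = 1 - cnj x * x"
  by (metis complex_norm_square mult.commute of_real_1 of_real_diff)

lemma pbracket_Phi_Phi_star_Suc:
  assumes "pbracket n (Phi n z) (Phi n w) a = 0" and "pbracket n (Phi_star n z) (Phi_star n w) a = 0"
  shows "pbracket (Suc n) (Phi (Suc n) z) (Phi_star (Suc n) w) a
    = z * pbracket n (Phi n z) (Phi_star n w) a
      - cnj (a n) * a n * (w * pbracket n (Phi n w) (Phi_star n z) a)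
      + \<i> * (1 - cnj (a n) * a n) * w * Phi_star n z a * Phi n w a"
  unfolding pbracket_Suc pbracket_OPUC_Suc_left pbracket_OPUC_Suc_right wirt_Phi_Suc_self
    pbracket_antisym[of n "Phi_star n z" "Phi n w"] assms of_real_1_minus_norm_power2
  by (simp add: algebra_simps)

lemma pbracket_Phi_Phi_Suc:
  assumes "pbracket n (Phi n z) (Phi n w) a = 0" and "pbracket n (Phi_star n z) (Phi_star n w) a = 0"
  shows "pbracket (Suc n) (Phi (Suc n) z) (Phi (Suc n) w) a
    = cnj (a n) * (w * pbracket n (Phi n w) (Phi_star n z) a - z * pbracket n (Phi n z) (Phi_star n w) a)"
  unfolding pbracket_Suc pbracket_OPUC_Suc_left pbracket_OPUC_Suc_right wirt_Phi_Suc_self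
    pbracket_antisym[of n "Phi_star n z" "Phi n w"] assms
  by (simp add: algebra_simps)

lemma pbracket_Phi_star_Phi_star_Suc:
  assumes "pbracket n (Phi n z) (Phi n w) a = 0" and "pbracket n (Phi_star n z) (Phi_star n w) a = 0"
  shows "pbracket (Suc n) (Phi_star (Suc n) z) (Phi_star (Suc n) w) a
    = a n * (w * pbracket n (Phi n w) (Phi_star n z) a - z * pbracket n (Phi n z) (Phi_star n w) a)"
  unfolding pbracket_Suc pbracket_OPUC_Suc_left pbracket_OPUC_Suc_right wirt_Phi_Suc_self
    pbracket_antisym[of n "Phi_star n z" "Phi n w"] assms
  by (simp add: algebra_simps)

lemma pbracket_OPUC:
  "(z - w) * pbracket n (Phi n z) (Phi_star n w) a
      = \<i> * w * (Phi n z a * Phi_star n w a - Phi n w a * Phi_star n z a)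
    \<and> pbracket n (Phi n z) (Phi n w) a = 0
    \<and> pbracket n (Phi_star n z) (Phi_star n w) a = 0"
proof (induction n arbitrary: z w)
  case 0
  show ?case by (simp add: pbracket_def Phi_def Phi_star_def rev_poly_def)
next
  case (Suc n)
  have PP: "pbracket n (Phi n z) (Phi n w) a = 0"
    and QQ: "pbracket n (Phi_star n z) (Phi_star n w) a = 0"
    using Suc.IH by blast+
  have swap: "w * pbracket n (Phi n w) (Phi_star n z) a = z * pbracket n (Phi n z) (Phi_star n w) a"
  proof (cases "z = w")
    case False
    have "(z - w) * (w * pbracket n (Phi n w) (Phi_star n z) a - z * pbracket n (Phi n z) (Phi_star n w) a)
        = - w * ((w - z) * pbracket n (Phi n w) (Phi_star n z) a)
          - z * ((z - w) * pbracket n (Phi n z) (Phi_star n w) a)"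
      by (simp add: algebra_simps)
    also have "\<dots> = 0"
      unfolding Suc.IH[THEN conjunct1] by (simp add: algebra_simps)
    finally show ?thesis
      using False by simp
  qed simp
  have "(z - w) * pbracket (Suc n) (Phi (Suc n) z) (Phi_star (Suc n) w) a
      = (1 - cnj (a n) * a n) * (z * ((z - w) * pbracket n (Phi n z) (Phi_star n w) a)
        + (z - w) * \<i> * w * Phi_star n z a * Phi n w a)"
    unfolding pbracket_Phi_Phi_star_Suc[OF PP QQ] swap by (simp add: algebra_simps)
  also have "\<dots> = \<i> * w * (Phi (Suc n) z a * Phi_star (Suc n) w a - Phi (Suc n) w a * Phi_star (Suc n) z a)"
    unfolding Suc.IH[THEN conjunct1] Phi_Suc Phi_star_Suc by (simp add: algebra_simps)
  finally show ?case
    unfolding pbracket_Phi_Phi_Suc[OF PP QQ] pbracket_Phi_star_Phi_star_Suc[OF PP QQ] swap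
    by simp
qed

theorem theorem13p5:
  fixes n :: nat and z w :: complex and a :: "nat \<Rightarrow> complex"
  assumes "n \<ge> 1" and "a \<in> polydisc n" and "z \<noteq> w"
  shows "pbracket n (Phi n z) (Phi_star n w) a
     = \<i> * w * (Phi n z a * Phi_star n w a - Phi n w a * Phi_star n z a) / (z - w)"
proof -
  have "z - w \<noteq> 0"
    using assms(3) by simp
  with pbracket_OPUC[of z w n a] show ?thesis
    by (simp add: eq_divide_eq mult.commute)
qed

end
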